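(* Let $N\ge1$, $d\ge1$, $H\in(0,1)^N$, and let $v$ and $v(A,x)$ be defined as in the context. For any $n>1$, let $F_n=[1/n,n]^N$ and $\gamma_i=H_i^{-1}-1$. Then there is a constant $c_0>0$ depending on $n$ such that for all $0\le a<b\le\infty$ and all $x,y\in F_n$, $$\big\|(v(x)-v([a,b),x))-(v(y)-v([a,b),y))\big\|_{L^2}\le c_0\Big(\sum_{i=1}^N a^{\gamma_i}|x_i-y_i|+b^{-1}\Big),$$ with $b^{-1}=0$ when $b=\infty$.
   Context: For $\alpha\in(0,1)$ let $c_\alpha=\big(\int_{\mathbb{R}}\frac{1-\cos\xi}{|\xi|^{2\alpha+1}}d\xi\big)^{-1/2}$ and $c_H=\prod_{i=1}^Nc_{H_i}$. Let $f_0(t)=1-\cos t$, $f_1(t)=\sin t$. Let $W_p$, $p\in\{0,1\}^N$, be independent $\mathbb{R}^d$-valued Gaussian white noises on $\mathbb{R}^N$ (Lebesgue control measure). Define $v(x)=c_H\sum_{p\in\{0,1\}^N}\int_{\mathbb{R}^N}\prod_{i=1}^N\frac{f_{p_i}(x_i\xi_i)}{|\xi_i|^{H_i+1/2}}W_p(d\xi)$ for $x\in\mathbb{R}^N_+$ (an $(N,d)$-fractional Brownian sheet), and for Borel $A\subset[0,\infty)$ and $x\in(0,\infty)^N$, $v(A,x)=c_H\sum_{p\in\{0,1\}^N}\int_{\{\xi:\max_i|\xi_i|^{H_i}\in A\}}\prod_{i=1}^N\frac{f_{p_i}(x_i\xi_i)}{|\xi_i|^{H_i+1/2}}W_p(d\xi)$.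 $\|X\|_{L^2}=(\mathrm E|X|^2)^{1/2}$. *)

theory Defs
  imports "HOL-Probability.Probability"
begin

definition isonormal :: "'a measure \<Rightarrow> 's measure \<Rightarrow> (('s \<Rightarrow> real) \<Rightarrow> 'a \<Rightarrow> real) \<Rightarrow> bool" where
  "isonormal P S W \<longleftrightarrow> prob_space P \<and>
     (\<forall>f. f \<in> borel_measurable S \<and> integrable S (\<lambda>s. (f s)\<^sup>2) \<longrightarrow>
        W f \<in> borel_measurable P \<and>
        (if (\<integral>s. (f s)\<^sup>2 \<partial>S) = 0 then (AE \<omega> in P. W f \<omega> = 0)
         else distributed P lborel (W f) (normal_density 0 (sqrt (\<integral>s. (f s)\<^sup>2 \<partial>S))))) \<and>
     (\<forall>f g a b. f \<in> borel_measurable S \<and> integrable S (\<lambda>s. (f s)\<^sup>2) \<and>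
        g \<in> borel_measurable S \<and> integrable S (\<lambda>s. (g s)\<^sup>2) \<longrightarrow>
        (AE \<omega> in P. W (\<lambda>s. a * f s + b * g s) \<omega> = a * W f \<omega> + b * W g \<omega>))"

text \<open>A family (W_p), p in {0,1}^N, of independent R^d-valued Gaussian white noises on R^N
  with Lebesgue control measure = an isonormal process on L2({0,1}^N x {1..d} x R^N)
  (counting measure on the finite index part). The index p is encoded as 'n => bool,
  component k of R^d as k :: 'd.\<close>
definition white_noise_family ::
  "'a measure \<Rightarrow> (((('n::finite \<Rightarrow> bool) \<times> ('d::finite)) \<times> (real^'n) \<Rightarrow> real) \<Rightarrow> 'a \<Rightarrow> real) \<Rightarrow> bool" where
  "white_noise_family P W \<longleftrightarrow> isonormal P (count_space UNIV \<Otimes>\<^sub>M lborel) W"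

definition c_alpha :: "real \<Rightarrow> real" where
  "c_alpha \<alpha> = (\<integral>\<xi>. (1 - cos \<xi>) / \<bar>\<xi>\<bar> powr (2 * \<alpha> + 1) \<partial>lborel) powr (-1/2)"

definition c_H :: "real^'n::finite \<Rightarrow> real" where
  "c_H H = (\<Prod>i\<in>UNIV. c_alpha (H $ i))"

definition fp :: "bool \<Rightarrow> real \<Rightarrow> real" where
  "fp p t = (if p then sin t else 1 - cos t)"

text \<open>Kernel of the harmonizable representation, restricted to the frequency set
  {xi. max_i |xi_i|^{H_i} \<in> A}; A = UNIV gives the full kernel.\<close>
definition fbs_kernel :: "real^'n::finite \<Rightarrow> real set \<Rightarrow> real^'n \<Rightarrow> 'd \<Rightarrow>
    (('n \<Rightarrow> bool) \<times> 'd) \<times> (real^'n) \<Rightarrow> real" where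
  "fbs_kernel H A x k = (\<lambda>((p, k'), \<xi>).
     if k' = k \<and> Max (range (\<lambda>i. \<bar>\<xi> $ i\<bar> powr (H $ i))) \<in> A then
       c_H H * (\<Prod>i\<in>UNIV. fp (p i) (x $ i * \<xi> $ i) / \<bar>\<xi> $ i\<bar> powr (H $ i + 1/2))
     else 0)"

definition fbs :: "real^'n::finite \<Rightarrow> (((('n \<Rightarrow> bool) \<times> 'd::finite) \<times> (real^'n) \<Rightarrow> real) \<Rightarrow> 'a \<Rightarrow> real)
    \<Rightarrow> real^'n \<Rightarrow> 'a \<Rightarrow> real^'d" where
  "fbs H W x = (\<lambda>\<omega>. \<chi> k. W (fbs_kernel H UNIV x k) \<omega>)"

definition fbs_part :: "real^'n::finite \<Rightarrow> (((('n \<Rightarrow> bool) \<times> 'd::finite) \<times> (real^'n) \<Rightarrow> real) \<Rightarrow> 'a \<Rightarrow> real)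
    \<Rightarrow> real set \<Rightarrow> real^'n \<Rightarrow> 'a \<Rightarrow> real^'d" where
  "fbs_part H W A x = (\<lambda>\<omega>. \<chi> k. W (fbs_kernel H A x k) \<omega>)"

definition L2norm :: "'a measure \<Rightarrow> ('a \<Rightarrow> real^'d::finite) \<Rightarrow> real" where
  "L2norm P X = sqrt (\<integral>\<omega>. (norm (X \<omega>))\<^sup>2 \<partial>P)"

end

theory Submission
  imports Defs
begin

text \<open>
  By the isometry of the white noise, the squared L2 norm of the increment is c_H^2 times a sum,
  over the index p and the d components, of the integral of (K_p(x,\<xi>) - K_p(y,\<xi>))^2 over the
  frequencies \<xi> whose scale max_i |\<xi>_i|^H_i lies outside [a,b), where
  K_p(x,\<xi>) = prod_i f_p_i(x_i \<xi>_i) / |\<xi>_i|^(H_i+1/2).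
  For |x_i| <= m every factor is dominated by 2 m min(|\<xi>_i|,1) / |\<xi>_i|^(H_i+1/2), whose square
  is integrable.
  Below the band all |\<xi>_i|^H_i are smaller than a; expanding the difference of the two products
  and using that f_p_i is 1-Lipschitz bounds the contribution of coordinate i by
  |x_i - y_i|^2 times the integral of |t|^(1-2H_i) over |t|^H_i < a, which is a^(2 gamma_i)/(1-H_i).
  Above the band some |\<xi>_i|^H_i is at least b, and the integral of |t|^(-2H_i-1) over that region
  is 1/(H_i b^2).
\<close>

section \<open>General estimates for finite sums and products\<close>

lemma abs_prod_diff_le:
  fixes u w M :: "'i \<Rightarrow> real"
  assumes "finite I" "\<And>i. i \<in> I \<Longrightarrow> \<bar>u i\<bar> \<le> M i" "\<And>i. i \<in> I \<Longrightarrow> \<bar>w i\<bar> \<le> M i"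
  shows "\<bar>prod u I - prod w I\<bar> \<le> (\<Sum>i\<in>I. \<bar>u i - w i\<bar> * prod M (I - {i}))"
  using assms
proof (induction I rule: finite_induct)
  case (insert a A)
  have M_nonneg: "0 \<le> M i" if "i \<in> insert a A" for i
    using insert.prems(1)[OF that] by linarith
  have "\<bar>prod u (insert a A) - prod w (insert a A)\<bar> = \<bar>(u a - w a) * prod u A + w a * (prod u A - prod w A)\<bar>"
    using insert.hyps by (simp add: algebra_simps)
  also have "\<dots> \<le> \<bar>u a - w a\<bar> * \<bar>prod u A\<bar> + \<bar>w a\<bar> * \<bar>prod u A - prod w A\<bar>"
    by (simp add: abs_mult abs_triangle_ineq[THEN order_trans])
  also have "\<dots> \<le> \<bar>u a - w a\<bar> * prod M A + M a * (\<Sum>i\<in>A. \<bar>u i - w i\<bar> * prod M (A - {i}))"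
    unfolding abs_prod using insert
    by (intro add_mono mult_mono prod_mono) (auto intro: M_nonneg prod_nonneg)
  also have "\<dots> = (\<Sum>i\<in>insert a A. \<bar>u i - w i\<bar> * prod M (insert a A - {i}))"
  proof -
    have "prod M (insert a A - {i}) = M a * prod M (A - {i})" if "i \<in> A" for i
    proof -
      have "insert a A - {i} = insert a (A - {i})" using that insert.hyps by auto
      then show ?thesis using insert.hyps by simp
    qed
    moreover have "insert a A - {a} = A" using insert.hyps by auto
    ultimately show ?thesis
      using insert.hyps by (simp add: sum_distrib_left algebra_simps cong: sum.cong)
  qed
  finally show ?case .
qed simp

lemma prod_diff_sq_le:
  fixes u w M :: "'i \<Rightarrow> real"
  assumes "finite I" "\<And>i. i \<in> I \<Longrightarrow> (u i)\<^sup>2 \<le> M i" "\<And>i. i \<in> I \<Longrightarrow> (w i)\<^sup>2 \<le> M i"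
  shows "(prod u I - prod w I)\<^sup>2 \<le> card I * (\<Sum>i\<in>I. (u i - w i)\<^sup>2 * prod M (I - {i}))"
proof -
  have M_nonneg: "0 \<le> M i" if "i \<in> I" for i
    using assms(2)[OF that] by (meson order_trans zero_le_power2)
  have "\<bar>u i\<bar> \<le> sqrt (M i)" "\<bar>w i\<bar> \<le> sqrt (M i)" if "i \<in> I" for i
    using assms(2,3)[OF that] real_le_rsqrt by (simp_all add: real_sqrt_abs[symmetric] del: real_sqrt_abs)
  then have "\<bar>prod u I - prod w I\<bar>\<^sup>2 \<le> (\<Sum>i\<in>I. \<bar>u i - w i\<bar> * (\<Prod>j\<in>I - {i}. sqrt (M j)))\<^sup>2"
    by (intro power_mono abs_prod_diff_le assms(1)) auto
  also have "\<dots> \<le> card I * (\<Sum>i\<in>I. (\<bar>u i - w i\<bar> * (\<Prod>j\<in>I - {i}. sqrt (M j)))\<^sup>2)"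
    using sum_squared_le_sum_of_squares by (simp add: mult.commute)
  also have "\<dots> = card I * (\<Sum>i\<in>I. (u i - w i)\<^sup>2 * prod M (I - {i}))"
    using M_nonneg by (auto simp: power_mult_distrib prod_power_distrib intro!: sum.cong prod.cong)
  finally show ?thesis by simp
qed

lemma sum_mult_le_sum_mult_sum:
  fixes B s :: "'i \<Rightarrow> real"
  assumes "finite A" "\<And>i. i \<in> A \<Longrightarrow> 0 \<le> B i" "\<And>i. i \<in> A \<Longrightarrow> 0 \<le> s i"
  shows "(\<Sum>i\<in>A. B i * s i) \<le> (\<Sum>i\<in>A. B i) * (\<Sum>i\<in>A. s i)"
  unfolding sum_distrib_right using assms
  by (intro sum_mono mult_left_mono member_le_sum) auto

lemma sum_squares_le_square_sum:
  fixes f :: "'i \<Rightarrow> real"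
  assumes "\<And>i. i \<in> A \<Longrightarrow> 0 \<le> f i"
  shows "(\<Sum>i\<in>A. (f i)\<^sup>2) \<le> (\<Sum>i\<in>A. f i)\<^sup>2"
proof -
  have "(L2_set f A)\<^sup>2 \<le> (sum f A)\<^sup>2"
    using assms by (intro power_mono L2_set_le_sum L2_set_nonneg) auto
  then show ?thesis by (simp add: L2_set_def sum_nonneg)
qed

section \<open>Nonnegative integrals on the line and on real^n\<close>

lemma nn_integral_cmult_le:
  assumes [measurable]: "f \<in> borel_measurable M" and "\<And>x. 0 \<le> f x" "0 \<le> c"
    and "(\<integral>\<^sup>+x. ennreal (f x) \<partial>M) \<le> ennreal F"
  shows "(\<integral>\<^sup>+x. ennreal (c * f x) \<partial>M) \<le> ennreal (c * F)"
proof -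
  have "(\<integral>\<^sup>+x. ennreal (c * f x) \<partial>M) = ennreal c * (\<integral>\<^sup>+x. ennreal (f x) \<partial>M)"
    using assms by (simp add: ennreal_mult nn_integral_cmult)
  also have "\<dots> \<le> ennreal c * ennreal F"
    using assms by (intro mult_left_mono) auto
  finally show ?thesis using assms by (simp add: ennreal_mult')
qed

lemma nn_integral_abs_le_twice_nonneg:
  fixes f :: "real \<Rightarrow> real"
  assumes [measurable]: "f \<in> borel_measurable borel" and nonneg: "\<And>t. 0 \<le> f t"
  shows "(\<integral>\<^sup>+t. ennreal (f \<bar>t\<bar>) \<partial>lborel) \<le> 2 * (\<integral>\<^sup>+t. ennreal (indicator {0..} t * f t) \<partial>lborel)"
proof -
  have "(\<integral>\<^sup>+t. ennreal (f \<bar>t\<bar>) \<partial>lborel) \<le>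
        (\<integral>\<^sup>+t. ennreal (indicator {0..} t * f t) + ennreal (indicator {0..} (-t) * f (-t)) \<partial>lborel)"
    by (intro nn_integral_mono) (auto simp: indicator_def nonneg abs_if simp flip: ennreal_plus)
  also have "\<dots> = (\<integral>\<^sup>+t. ennreal (indicator {0..} t * f t) \<partial>lborel)
                 + (\<integral>\<^sup>+t. ennreal (indicator {0..} (-t) * f (-t)) \<partial>lborel)"
    by (intro nn_integral_add) auto
  also have "(\<integral>\<^sup>+t. ennreal (indicator {0..} (-t) * f (-t)) \<partial>lborel)
           = (\<integral>\<^sup>+t. ennreal (indicator {0..} t * f t) \<partial>lborel)"
    by (subst nn_integral_real_affine[where c="-1" and t=0]) auto
  finally show ?thesis by (simp add: mult_2)
qed

lemma nn_integral_abs_powr_near_0_le: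
  assumes "e > -1" "c \<ge> 0"
  shows "(\<integral>\<^sup>+t. ennreal (if \<bar>t\<bar> \<le> c then \<bar>t\<bar> powr e else 0) \<partial>lborel) \<le> ennreal (2 * c powr (e+1) / (e+1))"
proof -
  have "(\<integral>\<^sup>+t. ennreal (if \<bar>t\<bar> \<le> c then \<bar>t\<bar> powr e else 0) \<partial>lborel)
      \<le> 2 * (\<integral>\<^sup>+t. ennreal (indicator {0..} t * (if t \<le> c then t powr e else 0)) \<partial>lborel)"
    by (rule nn_integral_abs_le_twice_nonneg[where f="\<lambda>t. if t \<le> c then t powr e else 0", simplified])
      auto
  also have "(\<lambda>t. ennreal (indicator {0..} t * (if t \<le> c then t powr e else 0)))
           = (\<lambda>t. ennreal (indicator {0..c} t * t powr e))"
    by (auto simp: indicator_def)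
  also have "(\<integral>\<^sup>+t. ennreal (indicator {0..c} t * t powr e) \<partial>lborel) = ennreal (c powr (e+1) / (e+1))"
    using nn_integral_has_integral_lebesgue[OF _ has_integral_powr_from_0[OF assms]] by simp
  finally show ?thesis
    by (simp add: ennreal_mult'[symmetric] flip: ennreal_numeral)
qed

lemma nn_integral_abs_powr_near_inf_le:
  assumes "e < -1" "c > 0"
  shows "(\<integral>\<^sup>+t. ennreal (if c \<le> \<bar>t\<bar> then \<bar>t\<bar> powr e else 0) \<partial>lborel) \<le> ennreal (- 2 * c powr (e+1) / (e+1))"
proof -
  have "(\<integral>\<^sup>+t. ennreal (if c \<le> \<bar>t\<bar> then \<bar>t\<bar> powr e else 0) \<partial>lborel)
      \<le> 2 * (\<integral>\<^sup>+t. ennreal (indicator {0..} t * (if c \<le> t then t powr e else 0)) \<partial>lborel)"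
    by (rule nn_integral_abs_le_twice_nonneg[where f="\<lambda>t. if c \<le> t then t powr e else 0", simplified])
      auto
  also have "(\<lambda>t. ennreal (indicator {0..} t * (if c \<le> t then t powr e else 0)))
           = (\<lambda>t. ennreal (indicator {c..} t * t powr e))"
    using assms by (auto simp: indicator_def)
  also have "(\<integral>\<^sup>+t. ennreal (indicator {c..} t * t powr e) \<partial>lborel) = ennreal (- (c powr (e+1)) / (e+1))"
    using nn_integral_has_integral_lebesgue[OF _ has_integral_powr_to_inf[OF assms]] by simp
  finally show ?thesis
    by (simp add: ennreal_mult'[symmetric] flip: ennreal_numeral)
qed

lemma borel_measurable_vec_nth [measurable]: "(\<lambda>\<xi>::real^'n::finite. \<xi> $ i) \<in> borel_measurable borel"
  by (intro borel_measurable_continuous_onI continuous_intros)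

lemma nn_integral_vec_prod:
  fixes f :: "'n::finite \<Rightarrow> real \<Rightarrow> real"
  assumes [measurable]: "\<And>i. f i \<in> borel_measurable borel" and nonneg: "\<And>i t. 0 \<le> f i t"
  shows "(\<integral>\<^sup>+\<xi>. ennreal (\<Prod>i\<in>UNIV. f i (\<xi> $ i)) \<partial>(lborel :: (real^'n) measure))
       = (\<Prod>i\<in>UNIV. \<integral>\<^sup>+t. ennreal (f i t) \<partial>lborel)"
proof -
  define ax where "ax i = axis i (1::real)" for i :: 'n
  have inj: "inj ax" by (auto simp: ax_def inj_def axis_eq_axis)
  have Basis: "(Basis :: (real^'n) set) = range ax" by (auto simp: Basis_vec_def ax_def)
  define g where "g b = (\<lambda>t. ennreal (f (inv ax b) t))" for b
  have "(\<integral>\<^sup>+\<xi>. (\<Prod>b\<in>Basis. g b (\<xi> \<bullet> b)) \<partial>(lborel :: (real^'n) measure)) = (\<Prod>b\<in>Basis. \<integral>\<^sup>+t. g b t \<partial>lborel)"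
    by (rule nn_integral_lborel_prod) (auto simp: g_def)
  moreover have "(\<Prod>b\<in>Basis. g b (\<xi> \<bullet> b)) = ennreal (\<Prod>i\<in>UNIV. f i (\<xi> $ i))" for \<xi> :: "real^'n"
  proof -
    have "\<xi> \<bullet> ax i = \<xi> $ i" for i by (simp add: ax_def inner_axis)
    then show ?thesis
      unfolding Basis prod.reindex[OF inj] by (simp add: g_def inv_f_f[OF inj] prod_ennreal nonneg)
  qed
  moreover have "(\<Prod>b\<in>Basis. \<integral>\<^sup>+t. g b t \<partial>lborel) = (\<Prod>i\<in>UNIV. \<integral>\<^sup>+t. ennreal (f i t) \<partial>lborel)"
    unfolding Basis prod.reindex[OF inj] by (simp add: g_def inv_f_f[OF inj])
  ultimately show ?thesis by simp
qed

lemma nn_integral_sum_prod_except_le: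
  fixes g f :: "'n::finite \<Rightarrow> real \<Rightarrow> real"
  assumes [measurable]: "\<And>i. g i \<in> borel_measurable borel" "\<And>j. f j \<in> borel_measurable borel"
    and nonneg: "\<And>i t. 0 \<le> g i t" "\<And>j t. 0 \<le> f j t"
    and G: "\<And>i. (\<integral>\<^sup>+t. ennreal (g i t) \<partial>lborel) \<le> ennreal (G i)" "\<And>i. 0 \<le> G i"
    and B: "\<And>j. (\<integral>\<^sup>+t. ennreal (f j t) \<partial>lborel) \<le> ennreal (B j)" "\<And>j. 1 \<le> B j"
  shows "(\<integral>\<^sup>+\<xi>. ennreal (\<Sum>i\<in>UNIV. g i (\<xi> $ i) * (\<Prod>j\<in>UNIV - {i}. f j (\<xi> $ j))) \<partial>lborel)
       \<le> ennreal ((\<Sum>i\<in>UNIV. G i) * (\<Prod>j\<in>UNIV. B j))"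
proof -
  have B_nonneg: "0 \<le> B j" for j using B(2)[of j] by linarith
  have single: "(\<integral>\<^sup>+\<xi>. ennreal (g i (\<xi> $ i) * (\<Prod>j\<in>UNIV - {i}. f j (\<xi> $ j))) \<partial>lborel)
      \<le> ennreal (G i * (\<Prod>j\<in>UNIV. B j))" for i
  proof -
    define F where "F j = (if j = i then g i else f j)" for j
    have [measurable]: "F j \<in> borel_measurable borel" for j by (simp add: F_def)
    have F_nonneg: "0 \<le> F j t" for j t by (simp add: F_def nonneg)
    have "(\<Prod>j\<in>UNIV. F j (\<xi> $ j)) = g i (\<xi> $ i) * (\<Prod>j\<in>UNIV - {i}. f j (\<xi> $ j))" for \<xi> :: "real^'n"
      by (subst prod.remove[of _ i]) (auto simp: F_def intro!: prod.cong)
    then have "(\<integral>\<^sup>+\<xi>. ennreal (g i (\<xi> $ i) * (\<Prod>j\<in>UNIV - {i}. f j (\<xi> $ j))) \<partial>lborel)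
        = (\<Prod>j\<in>UNIV. \<integral>\<^sup>+t. ennreal (F j t) \<partial>lborel)"
      using nn_integral_vec_prod[of F, OF _ F_nonneg] by simp
    also have "\<dots> \<le> (\<Prod>j\<in>UNIV. ennreal (if j = i then G i else B j))"
      using G(1) B(1) by (intro prod_mono_ennreal) (auto simp: F_def)
    also have "\<dots> = ennreal (\<Prod>j\<in>UNIV. if j = i then G i else B j)"
      by (rule prod_ennreal) (simp add: G(2) B_nonneg)
    also have "(\<Prod>j\<in>UNIV. if j = i then G i else B j) = G i * (\<Prod>j\<in>UNIV - {i}. B j)"
      by (subst prod.remove[of _ i]) auto
    also have "\<dots> \<le> ennreal (G i * (\<Prod>j\<in>UNIV. B j))"
      using B(2) by (intro ennreal_leI mult_left_mono prod_mono2 G(2) B_nonneg) auto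
    finally show ?thesis .
  qed
  have "(\<integral>\<^sup>+\<xi>. ennreal (\<Sum>i\<in>UNIV. g i (\<xi> $ i) * (\<Prod>j\<in>UNIV - {i}. f j (\<xi> $ j))) \<partial>lborel)
      = (\<integral>\<^sup>+\<xi>. (\<Sum>i\<in>UNIV. ennreal (g i (\<xi> $ i) * (\<Prod>j\<in>UNIV - {i}. f j (\<xi> $ j)))) \<partial>lborel)"
    by (intro nn_integral_cong sum_ennreal[symmetric]) (simp add: nonneg prod_nonneg)
  also have "\<dots> = (\<Sum>i\<in>UNIV. \<integral>\<^sup>+\<xi>. ennreal (g i (\<xi> $ i) * (\<Prod>j\<in>UNIV - {i}. f j (\<xi> $ j))) \<partial>lborel)"
    by (rule nn_integral_sum) simp
  also have "\<dots> \<le> (\<Sum>i\<in>UNIV. ennreal (G i * (\<Prod>j\<in>UNIV. B j)))"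
    by (intro sum_mono single)
  also have "\<dots> = ennreal ((\<Sum>i\<in>UNIV. G i) * (\<Prod>j\<in>UNIV. B j))"
    by (simp add: sum_ennreal G(2) B_nonneg prod_nonneg sum_distrib_right)
  finally show ?thesis .
qed

lemma nn_integral_finite_count_space_pair:
  fixes F :: "'i::finite \<times> 'b \<Rightarrow> ennreal"
  assumes "sigma_finite_measure M" and "F \<in> borel_measurable (count_space UNIV \<Otimes>\<^sub>M M)"
  shows "integral\<^sup>N (count_space UNIV \<Otimes>\<^sub>M M) F = (\<Sum>i\<in>UNIV. \<integral>\<^sup>+y. F (i, y) \<partial>M)"
  by (simp add: sigma_finite_measure.nn_integral_fst[OF assms, symmetric] nn_integral_count_space_finite)

section \<open>Isonormal processes\<close>

definition square_integrable :: "'s measure \<Rightarrow> ('s \<Rightarrow> real) \<Rightarrow> bool" where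
  "square_integrable S f \<longleftrightarrow> f \<in> borel_measurable S \<and> integrable S (\<lambda>s. (f s)\<^sup>2)"

lemma square_integrable_diff:
  assumes f: "square_integrable S f" and g: "square_integrable S g"
  shows "square_integrable S (\<lambda>s. f s - g s)"
proof -
  have [measurable]: "f \<in> borel_measurable S" "g \<in> borel_measurable S"
    using f g by (simp_all add: square_integrable_def)
  have int: "integrable S (\<lambda>s. 2 * (f s)\<^sup>2 + 2 * (g s)\<^sup>2)"
    using f g by (simp add: square_integrable_def)
  have bound: "(f s - g s)\<^sup>2 \<le> 2 * (f s)\<^sup>2 + 2 * (g s)\<^sup>2" for s
    using zero_le_power2[of "f s + g s"] by (simp add: power2_diff power2_sum)
  have "integrable S (\<lambda>s. (f s - g s)\<^sup>2)"
    by (rule Bochner_Integration.integrable_bound[OF int]) (simp_all add: AE_I2 bound)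
  then show ?thesis by (simp add: square_integrable_def)
qed

lemma isonormal_measurable:
  "isonormal P S W \<Longrightarrow> square_integrable S f \<Longrightarrow> W f \<in> borel_measurable P"
  unfolding isonormal_def square_integrable_def by blast

lemma isonormal_diff:
  assumes "isonormal P S W" "square_integrable S f" "square_integrable S g"
  shows "AE \<omega> in P. W (\<lambda>s. f s - g s) \<omega> = W f \<omega> - W g \<omega>"
proof -
  have "AE \<omega> in P. W (\<lambda>s. 1 * f s + (- 1) * g s) \<omega> = 1 * W f \<omega> + (- 1) * W g \<omega>"
    using assms unfolding isonormal_def square_integrable_def by blast
  then show ?thesis by simp
qed

lemma isonormal_second_moment:
  assumes iso: "isonormal P S W" and f: "square_integrable S f"
  shows "integrable P (\<lambda>\<omega>. (W f \<omega>)\<^sup>2)" and "(\<integral>\<omega>. (W f \<omega>)\<^sup>2 \<partial>P) = (\<integral>s. (f s)\<^sup>2 \<partial>S)"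
proof -
  interpret prob_space P using iso by (simp add: isonormal_def)
  have [measurable]: "W f \<in> borel_measurable P" using isonormal_measurable[OF iso f] .
  define I where "I = (\<integral>s. (f s)\<^sup>2 \<partial>S)"
  have law: "if I = 0 then (AE \<omega> in P. W f \<omega> = 0) else distributed P lborel (W f) (normal_density 0 (sqrt I))"
    using iso f unfolding isonormal_def square_integrable_def I_def by blast
  have "integrable P (\<lambda>\<omega>. (W f \<omega>)\<^sup>2) \<and> (\<integral>\<omega>. (W f \<omega>)\<^sup>2 \<partial>P) = I"
  proof (cases "I = 0")
    case True
    have ae: "AE \<omega> in P. W f \<omega> = 0" using law True by simp
    have "integrable P (\<lambda>\<omega>. (W f \<omega>)\<^sup>2) = integrable P (\<lambda>_. 0::real)"
      by (rule integrable_cong_AE) (simp_all add: ae)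
    moreover have "(\<integral>\<omega>. (W f \<omega>)\<^sup>2 \<partial>P) = (\<integral>_. 0 \<partial>P)"
      by (rule integral_cong_AE) (simp_all add: ae)
    ultimately show ?thesis using True by simp
  next
    case False
    have "0 \<le> I" unfolding I_def by simp
    with False have \<sigma>: "0 < sqrt I" by simp
    have law: "distributed P lborel (W f) (normal_density 0 (sqrt I))" using law False by simp
    have "integrable lborel (\<lambda>x. normal_density 0 (sqrt I) x * x\<^sup>2)"
      using integrable_normal_moment[OF \<sigma>, of 0 2] by simp
    then have "integrable P (\<lambda>\<omega>. (W f \<omega>)\<^sup>2)"
      using distributed_integrable[OF law, of "\<lambda>x. x\<^sup>2"] by simp
    moreover have "expectation (W f) = 0" by (rule normal_distributed_expectation[OF \<sigma> law])
    moreover have "variance (W f) = I"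
      using normal_distributed_variance[OF \<sigma> law] \<open>0 \<le> I\<close> by simp
    ultimately show ?thesis by simp
  qed
  then show "integrable P (\<lambda>\<omega>. (W f \<omega>)\<^sup>2)" and "(\<integral>\<omega>. (W f \<omega>)\<^sup>2 \<partial>P) = (\<integral>s. (f s)\<^sup>2 \<partial>S)"
    by (simp_all add: I_def)
qed

lemma L2norm_isonormal_components:
  fixes X :: "'a \<Rightarrow> real^'d::finite"
  assumes iso: "isonormal P S W" and g: "\<And>k. square_integrable S (g k)"
    and X_meas: "\<And>k. (\<lambda>\<omega>. X \<omega> $ k) \<in> borel_measurable P"
    and X_eq: "\<And>k. AE \<omega> in P. X \<omega> $ k = W (g k) \<omega>"
  shows "L2norm P X = sqrt (\<Sum>k\<in>UNIV. \<integral>s. (g k s)\<^sup>2 \<partial>S)"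
proof -
  have [measurable]: "W (g k) \<in> borel_measurable P" for k using isonormal_measurable[OF iso g] .
  have sq_eq: "AE \<omega> in P. (X \<omega> $ k)\<^sup>2 = (W (g k) \<omega>)\<^sup>2" for k
    using X_eq[of k] by eventually_elim simp
  have int: "integrable P (\<lambda>\<omega>. (X \<omega> $ k)\<^sup>2)" for k
    using isonormal_second_moment(1)[OF iso g] X_meas by (subst integrable_cong_AE[OF _ _ sq_eq]) auto
  have "(\<integral>\<omega>. (norm (X \<omega>))\<^sup>2 \<partial>P) = (\<integral>\<omega>. (\<Sum>k\<in>UNIV. (X \<omega> $ k)\<^sup>2) \<partial>P)"
    by (simp add: norm_vec_def L2_set_def sum_nonneg)
  also have "\<dots> = (\<Sum>k\<in>UNIV. \<integral>\<omega>. (X \<omega> $ k)\<^sup>2 \<partial>P)"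
    using int by (rule Bochner_Integration.integral_sum)
  also have "\<dots> = (\<Sum>k\<in>UNIV. \<integral>s. (g k s)\<^sup>2 \<partial>S)"
    using X_meas isonormal_second_moment(2)[OF iso g]
    by (intro sum.cong refl) (subst integral_cong_AE[OF _ _ sq_eq]; simp)
  finally show ?thesis by (simp add: L2norm_def)
qed

section \<open>The one-dimensional kernel factors\<close>

lemma nn_integral_low_frequency_le:
  assumes h: "0 < h" "h < 1" and a: "0 \<le> a"
  shows "(\<integral>\<^sup>+t. ennreal (if \<bar>t\<bar> powr h < a then \<bar>t\<bar> powr (1 - 2*h) else 0) \<partial>lborel)
         \<le> ennreal (a powr (2 * (1/h - 1)) / (1 - h))"
proof -
  have "(\<integral>\<^sup>+t. ennreal (if \<bar>t\<bar> powr h < a then \<bar>t\<bar> powr (1 - 2*h) else 0) \<partial>lborel)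
      \<le> (\<integral>\<^sup>+t. ennreal (if \<bar>t\<bar> \<le> a powr (1/h) then \<bar>t\<bar> powr (1 - 2*h) else 0) \<partial>lborel)"
  proof (intro nn_integral_mono)
    fix t :: real
    have "\<bar>t\<bar> \<le> a powr (1/h)" if "\<bar>t\<bar> powr h < a"
      using powr_less_mono2[of "1/h" "\<bar>t\<bar> powr h" a] that h by (simp add: powr_powr)
    then show "ennreal (if \<bar>t\<bar> powr h < a then \<bar>t\<bar> powr (1 - 2*h) else 0)
             \<le> ennreal (if \<bar>t\<bar> \<le> a powr (1/h) then \<bar>t\<bar> powr (1 - 2*h) else 0)"
      by auto
  qed
  also have "\<dots> \<le> ennreal (2 * (a powr (1/h)) powr (2 - 2*h) / (2 - 2*h))"
    using nn_integral_abs_powr_near_0_le[of "1 - 2*h" "a powr (1/h)"] h by simp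
  also have "2 * (a powr (1/h)) powr (2 - 2*h) / (2 - 2*h) = a powr (2 * (1/h - 1)) / (1 - h)"
    using h by (simp add: powr_powr field_simps)
  finally show ?thesis .
qed

lemma nn_integral_high_frequency_le:
  assumes h: "0 < h" "h < 1" and b: "0 < b"
  shows "(\<integral>\<^sup>+t. ennreal (if b \<le> \<bar>t\<bar> powr h then \<bar>t\<bar> powr (- 2*h - 1) else 0) \<partial>lborel)
         \<le> ennreal (1 / (h * b\<^sup>2))"
proof -
  have "(\<integral>\<^sup>+t. ennreal (if b \<le> \<bar>t\<bar> powr h then \<bar>t\<bar> powr (- 2*h - 1) else 0) \<partial>lborel)
      \<le> (\<integral>\<^sup>+t. ennreal (if b powr (1/h) \<le> \<bar>t\<bar> then \<bar>t\<bar> powr (- 2*h - 1) else 0) \<partial>lborel)"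
  proof (intro nn_integral_mono)
    fix t :: real
    have "b powr (1/h) \<le> \<bar>t\<bar>" if "b \<le> \<bar>t\<bar> powr h"
      using powr_mono2[of "1/h" b "\<bar>t\<bar> powr h"] that h b by (simp add: powr_powr)
    then show "ennreal (if b \<le> \<bar>t\<bar> powr h then \<bar>t\<bar> powr (- 2*h - 1) else 0)
             \<le> ennreal (if b powr (1/h) \<le> \<bar>t\<bar> then \<bar>t\<bar> powr (- 2*h - 1) else 0)"
      by auto
  qed
  also have "\<dots> \<le> ennreal (- 2 * (b powr (1/h)) powr (- 2*h) / (- 2*h))"
    using nn_integral_abs_powr_near_inf_le[of "- 2*h - 1" "b powr (1/h)"] h b by simp
  also have "- 2 * (b powr (1/h)) powr (- 2*h) / (- 2*h) = 1 / (h * b\<^sup>2)"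
    using h b by (simp add: powr_powr powr_minus_divide powr_numeral)
  finally show ?thesis .
qed

lemma sq_mult_abs_powr:
  fixes t h :: real
  shows "t\<^sup>2 * \<bar>t\<bar> powr (- 2*h - 1) = \<bar>t\<bar> powr (1 - 2*h)"
proof -
  have "t\<^sup>2 = \<bar>t\<bar> powr 2" by (simp add: powr_numeral)
  then have "t\<^sup>2 * \<bar>t\<bar> powr (- 2*h - 1) = \<bar>t\<bar> powr (2 + (- 2*h - 1))"
    by (simp only: powr_add)
  then show ?thesis by simp
qed

definition kernel_envelope :: "real \<Rightarrow> real \<Rightarrow> real" where
  "kernel_envelope h t = min (t\<^sup>2) 1 * \<bar>t\<bar> powr (- 2*h - 1)"

lemma kernel_envelope_nonneg: "0 \<le> kernel_envelope h t"
  by (simp add: kernel_envelope_def)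

lemma kernel_envelope_le: "kernel_envelope h t \<le> \<bar>t\<bar> powr (- 2*h - 1)"
  unfolding kernel_envelope_def by (rule mult_left_le_one_le) auto

lemma borel_measurable_kernel_envelope [measurable]: "kernel_envelope h \<in> borel_measurable borel"
  unfolding kernel_envelope_def by measurable

lemma nn_integral_kernel_envelope_le:
  assumes h: "0 < h" "h < 1"
  shows "(\<integral>\<^sup>+t. ennreal (kernel_envelope h t) \<partial>lborel) \<le> ennreal (1 / (h * (1 - h)))"
proof -
  have "(\<integral>\<^sup>+t. ennreal (kernel_envelope h t) \<partial>lborel)
     \<le> (\<integral>\<^sup>+t. ennreal (if \<bar>t\<bar> powr h < 1 then \<bar>t\<bar> powr (1 - 2*h) else 0)
           + ennreal (if 1 \<le> \<bar>t\<bar> powr h then \<bar>t\<bar> powr (- 2*h - 1) else 0) \<partial>lborel)"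
  proof (intro nn_integral_mono)
    fix t :: real
    show "ennreal (kernel_envelope h t) \<le> ennreal (if \<bar>t\<bar> powr h < 1 then \<bar>t\<bar> powr (1 - 2*h) else 0)
           + ennreal (if 1 \<le> \<bar>t\<bar> powr h then \<bar>t\<bar> powr (- 2*h - 1) else 0)"
    proof (cases "\<bar>t\<bar> powr h < 1")
      case True
      then have "\<bar>t\<bar> < 1" using h ge_one_powr_ge_zero[of "\<bar>t\<bar>" h] by linarith
      then have "kernel_envelope h t = t\<^sup>2 * \<bar>t\<bar> powr (- 2*h - 1)"
        by (simp add: kernel_envelope_def abs_square_le_1 min_def)
      also have "\<dots> = \<bar>t\<bar> powr (1 - 2*h)"
        by (rule sq_mult_abs_powr)
      finally show ?thesis using True by simp
    next
      case False
      then show ?thesis using kernel_envelope_le[of h t] by simp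
    qed
  qed
  also have "\<dots> = (\<integral>\<^sup>+t. ennreal (if \<bar>t\<bar> powr h < 1 then \<bar>t\<bar> powr (1 - 2*h) else 0) \<partial>lborel)
           + (\<integral>\<^sup>+t. ennreal (if 1 \<le> \<bar>t\<bar> powr h then \<bar>t\<bar> powr (- 2*h - 1) else 0) \<partial>lborel)"
    by (intro nn_integral_add) auto
  also have "\<dots> \<le> ennreal (1 / (1 - h)) + ennreal (1 / h)"
    using add_mono[OF nn_integral_low_frequency_le[OF h, of 1] nn_integral_high_frequency_le[OF h, of 1]]
    by simp
  also have "\<dots> = ennreal (1 / (h * (1 - h)))"
    using h by (simp flip: ennreal_plus add: field_simps)
  finally show ?thesis .
qed

definition kernel_mass :: "real \<Rightarrow> real \<Rightarrow> real" where
  "kernel_mass m h = 4 * m\<^sup>2 / (h * (1 - h))"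

lemma kernel_mass_ge:
  assumes h: "0 < h" "h < 1" and m: "1 \<le> m"
  shows "1 / (1 - h) \<le> kernel_mass m h" and "4 * m\<^sup>2 / h \<le> kernel_mass m h"
proof -
  have "1 \<le> m\<^sup>2" using one_le_power[OF m] .
  have "1 / (1 - h) = h / (h * (1 - h))" using h by simp
  also have "\<dots> \<le> 4 * m\<^sup>2 / (h * (1 - h))"
    using h \<open>1 \<le> m\<^sup>2\<close> by (intro divide_right_mono) auto
  finally show "1 / (1 - h) \<le> kernel_mass m h" by (simp add: kernel_mass_def)
  have "4 * m\<^sup>2 / h \<le> 4 * m\<^sup>2 / (h * (1 - h))"
    using h by (intro divide_left_mono) (auto simp: mult_le_cancel_left1)
  then show "4 * m\<^sup>2 / h \<le> kernel_mass m h" by (simp add: kernel_mass_def)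
qed

lemma one_le_kernel_mass:
  assumes "0 < h" "h < 1" "1 \<le> m"
  shows "1 \<le> kernel_mass m h"
proof -
  have "1 \<le> 1 / (1 - h)" using assms by (simp add: le_divide_eq_1_pos)
  then show ?thesis using kernel_mass_ge(1)[OF assms] by linarith
qed

lemma nn_integral_scaled_kernel_envelope_le:
  assumes "0 < h" "h < 1"
  shows "(\<integral>\<^sup>+t. ennreal (4 * m\<^sup>2 * kernel_envelope h t) \<partial>lborel) \<le> ennreal (kernel_mass m h)"
  using nn_integral_cmult_le[OF _ kernel_envelope_nonneg _ nn_integral_kernel_envelope_le[OF assms]]
  by (simp add: kernel_mass_def)

lemma fp_lipschitz: "\<bar>fp p s - fp p s'\<bar> \<le> \<bar>s - s'\<bar>"
proof -
  have "\<bar>sin s - sin s'\<bar> = 2 * \<bar>sin ((s - s') / 2)\<bar> * \<bar>cos ((s + s') / 2)\<bar>"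
    by (simp add: sin_diff_sin abs_mult)
  also have "\<dots> \<le> 2 * \<bar>(s - s') / 2\<bar> * 1"
    by (intro mult_mono abs_sin_x_le_abs_x) auto
  finally have sin: "\<bar>sin s - sin s'\<bar> \<le> \<bar>s - s'\<bar>" by simp
  have "\<bar>cos s' - cos s\<bar> = 2 * \<bar>sin ((s' + s) / 2)\<bar> * \<bar>sin ((s - s') / 2)\<bar>"
    by (simp add: cos_diff_cos abs_mult)
  also have "\<dots> \<le> 2 * 1 * \<bar>(s - s') / 2\<bar>"
    by (intro mult_mono abs_sin_x_le_abs_x) auto
  finally have cos: "\<bar>cos s' - cos s\<bar> \<le> \<bar>s - s'\<bar>" by simp
  show ?thesis using sin cos by (simp add: fp_def)
qed

lemma fp_sq_le: "(fp p s)\<^sup>2 \<le> 4 * min (s\<^sup>2) 1"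
proof -
  have "\<bar>fp p s\<bar> \<le> \<bar>s\<bar>" using fp_lipschitz[of p s 0] by (cases p) (simp_all add: fp_def)
  moreover have "\<bar>fp p s\<bar> \<le> 2"
    using sin_le_one[of s] sin_ge_minus_one[of s] cos_le_one[of s] cos_ge_minus_one[of s]
    by (cases p) (simp_all only: fp_def if_True if_False abs_le_iff, linarith+)
  ultimately have "(fp p s)\<^sup>2 \<le> s\<^sup>2" "(fp p s)\<^sup>2 \<le> 4"
    using abs_le_square_iff[of "fp p s" s] abs_le_square_iff[of "fp p s" 2] by simp_all
  then show ?thesis
    using zero_le_power2[of s] unfolding min_def by (simp only: split: if_split) linarith
qed

lemma borel_measurable_fp [measurable]: "fp p \<in> borel_measurable borel"
  unfolding fp_def[abs_def] by measurable

definition kernel_factor :: "bool \<Rightarrow> real \<Rightarrow> real \<Rightarrow> real \<Rightarrow> real" where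
  "kernel_factor p h x t = fp p (x * t) / \<bar>t\<bar> powr (h + 1/2)"

lemma sq_div_abs_powr:
  fixes z t h :: real
  shows "(z / \<bar>t\<bar> powr (h + 1/2))\<^sup>2 = z\<^sup>2 * \<bar>t\<bar> powr (- 2*h - 1)"
proof -
  have "(\<bar>t\<bar> powr (h + 1/2))\<^sup>2 = \<bar>t\<bar> powr (2*h + 1)"
    by (simp add: power2_eq_square algebra_simps flip: powr_add)
  then have "(z / \<bar>t\<bar> powr (h + 1/2))\<^sup>2 = z\<^sup>2 / \<bar>t\<bar> powr (2*h + 1)"
    by (simp only: power_divide)
  also have "\<dots> = z\<^sup>2 * \<bar>t\<bar> powr (- (2*h + 1))"
    by (simp only: powr_minus divide_inverse)
  also have "- (2*h + 1) = - 2*h - 1"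
    by simp
  finally show ?thesis .
qed

lemma min_sq_scale_le:
  fixes x m t :: real
  assumes "\<bar>x\<bar> \<le> m" "1 \<le> m"
  shows "min ((x * t)\<^sup>2) 1 \<le> m\<^sup>2 * min (t\<^sup>2) 1"
proof (cases "t\<^sup>2 \<le> 1")
  case True
  have "x\<^sup>2 \<le> m\<^sup>2" using power_mono[OF assms(1) abs_ge_zero, of 2] by simp
  then have "(x * t)\<^sup>2 \<le> m\<^sup>2 * t\<^sup>2" unfolding power_mult_distrib by (rule mult_right_mono) simp
  then show ?thesis using True by (simp add: min_def)
next
  case False
  have "1 \<le> m\<^sup>2" using assms(2) by (simp add: one_le_power)
  then show ?thesis using False by (simp add: min_def)
qed

lemma kernel_factor_sq_le:
  assumes "\<bar>x\<bar> \<le> m" "1 \<le> m"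
  shows "(kernel_factor p h x t)\<^sup>2 \<le> 4 * m\<^sup>2 * kernel_envelope h t"
proof -
  have fp_le: "(fp p (x * t))\<^sup>2 \<le> 4 * (m\<^sup>2 * min (t\<^sup>2) 1)"
    by (rule order_trans[OF fp_sq_le]) (use min_sq_scale_le[OF assms] in simp)
  have "(kernel_factor p h x t)\<^sup>2 = (fp p (x * t))\<^sup>2 * \<bar>t\<bar> powr (- 2*h - 1)"
    unfolding kernel_factor_def by (rule sq_div_abs_powr)
  also have "\<dots> \<le> 4 * (m\<^sup>2 * min (t\<^sup>2) 1) * \<bar>t\<bar> powr (- 2*h - 1)"
    using fp_le by (rule mult_right_mono) simp
  also have "\<dots> = 4 * m\<^sup>2 * kernel_envelope h t"
    by (simp only: kernel_envelope_def mult.assoc)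
  finally show ?thesis .
qed

lemma kernel_factor_diff_sq_le:
  "(kernel_factor p h x t - kernel_factor p h y t)\<^sup>2 \<le> (x - y)\<^sup>2 * \<bar>t\<bar> powr (1 - 2*h)"
proof -
  have "(fp p (x * t) - fp p (y * t))\<^sup>2 \<le> (x - y)\<^sup>2 * t\<^sup>2"
    using fp_lipschitz[of p "x * t" "y * t"]
    by (simp add: abs_le_square_iff power_mult_distrib left_diff_distrib[symmetric])
  then have "(kernel_factor p h x t - kernel_factor p h y t)\<^sup>2 \<le> (x - y)\<^sup>2 * (t\<^sup>2 * \<bar>t\<bar> powr (- 2*h - 1))"
    unfolding kernel_factor_def diff_divide_distrib[symmetric] sq_div_abs_powr mult.assoc[symmetric]
    by (rule mult_right_mono) simp
  then show ?thesis by (simp only: sq_mult_abs_powr)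
qed

section \<open>The sheet kernel outside a frequency band\<close>

definition sheet_kernel :: "real^'n::finite \<Rightarrow> ('n \<Rightarrow> bool) \<Rightarrow> real^'n \<Rightarrow> real^'n \<Rightarrow> real" where
  "sheet_kernel H p x \<xi> = (\<Prod>i\<in>UNIV. kernel_factor (p i) (H $ i) (x $ i) (\<xi> $ i))"

definition freq_max :: "real^'n::finite \<Rightarrow> real^'n \<Rightarrow> real" where
  "freq_max H \<xi> = Max (range (\<lambda>i. \<bar>\<xi> $ i\<bar> powr (H $ i)))"

lemma borel_measurable_sheet_kernel [measurable]: "sheet_kernel H p x \<in> borel_measurable borel"
  unfolding sheet_kernel_def kernel_factor_def by measurable

lemma borel_measurable_freq_max [measurable]: "freq_max H \<in> borel_measurable borel"
  unfolding freq_max_def by measurable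

lemma freq_max_less_iff: "freq_max H \<xi> < a \<longleftrightarrow> (\<forall>i. \<bar>\<xi> $ i\<bar> powr (H $ i) < a)"
  unfolding freq_max_def by (subst Max_less_iff) auto

lemma le_freq_max_iff: "b \<le> freq_max H \<xi> \<longleftrightarrow> (\<exists>i. b \<le> \<bar>\<xi> $ i\<bar> powr (H $ i))"
  unfolding freq_max_def by (subst Max_ge_iff) auto

lemma sheet_kernel_sq_le:
  assumes "\<And>i. \<bar>x $ i\<bar> \<le> m" "1 \<le> m"
  shows "(sheet_kernel H p x \<xi>)\<^sup>2 \<le> (\<Prod>j\<in>UNIV. 4 * m\<^sup>2 * kernel_envelope (H $ j) (\<xi> $ j))"
  unfolding sheet_kernel_def prod_power_distrib by (intro prod_mono) (auto intro: kernel_factor_sq_le assms)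

lemma sheet_kernel_diff_sq_le:
  fixes H :: "real^'n::finite"
  assumes "\<And>i. \<bar>x $ i\<bar> \<le> m" "\<And>i. \<bar>y $ i\<bar> \<le> m" "1 \<le> m"
  shows "(sheet_kernel H p x \<xi> - sheet_kernel H p y \<xi>)\<^sup>2
    \<le> CARD('n) * (\<Sum>i\<in>UNIV. (x $ i - y $ i)\<^sup>2 * \<bar>\<xi> $ i\<bar> powr (1 - 2 * H $ i)
         * (\<Prod>j\<in>UNIV - {i}. 4 * m\<^sup>2 * kernel_envelope (H $ j) (\<xi> $ j)))"
  unfolding sheet_kernel_def
  by (rule order_trans[OF prod_diff_sq_le[where M="\<lambda>j. 4 * m\<^sup>2 * kernel_envelope (H $ j) (\<xi> $ j)"]])
    (auto intro!: mult_left_mono sum_mono mult_right_mono kernel_factor_sq_le kernel_factor_diff_sq_le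
      assms prod_nonneg mult_nonneg_nonneg kernel_envelope_nonneg)

definition increment_const :: "real^'n::finite \<Rightarrow> real \<Rightarrow> real" where
  "increment_const H m = 4 * CARD('n) * (\<Sum>j\<in>UNIV. kernel_mass m (H $ j)) * (\<Prod>j\<in>UNIV. kernel_mass m (H $ j))"

lemma increment_const_nonneg:
  assumes "\<And>i. 0 < H $ i \<and> H $ i < 1" "1 \<le> m"
  shows "0 \<le> increment_const H m"
  using assms order_trans[OF zero_le_one one_le_kernel_mass]
  by (simp add: increment_const_def sum_nonneg prod_nonneg)

lemma sheet_kernel_diff_sq_low_le:
  fixes H :: "real^'n::finite"
  assumes "\<And>i. \<bar>x $ i\<bar> \<le> m" "\<And>i. \<bar>y $ i\<bar> \<le> m" "1 \<le> m"
  shows "indicator {\<xi>. freq_max H \<xi> < a} \<xi> * (sheet_kernel H p x \<xi> - sheet_kernel H p y \<xi>)\<^sup>2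
    \<le> CARD('n) * (\<Sum>i\<in>UNIV. (x $ i - y $ i)\<^sup>2 * (if \<bar>\<xi> $ i\<bar> powr (H $ i) < a then \<bar>\<xi> $ i\<bar> powr (1 - 2 * H $ i) else 0)
         * (\<Prod>j\<in>UNIV - {i}. 4 * m\<^sup>2 * kernel_envelope (H $ j) (\<xi> $ j)))"
proof (cases "freq_max H \<xi> < a")
  case True
  then show ?thesis using sheet_kernel_diff_sq_le[OF assms, of H p \<xi>] by (simp add: freq_max_less_iff)
qed (simp add: kernel_envelope_nonneg sum_nonneg prod_nonneg)

lemma sheet_kernel_diff_sq_high_le:
  fixes H :: "real^'n::finite"
  assumes xy: "\<And>i. \<bar>x $ i\<bar> \<le> m" "\<And>i. \<bar>y $ i\<bar> \<le> m" and m: "1 \<le> m"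
  shows "indicator {\<xi>. b \<le> freq_max H \<xi>} \<xi> * (sheet_kernel H p x \<xi> - sheet_kernel H p y \<xi>)\<^sup>2
    \<le> 4 * (\<Sum>i\<in>UNIV. 4 * m\<^sup>2 * (if b \<le> \<bar>\<xi> $ i\<bar> powr (H $ i) then \<bar>\<xi> $ i\<bar> powr (- 2 * H $ i - 1) else 0)
         * (\<Prod>j\<in>UNIV - {i}. 4 * m\<^sup>2 * kernel_envelope (H $ j) (\<xi> $ j)))"
    (is "_ \<le> 4 * (\<Sum>i\<in>UNIV. ?g i * ?F i)")
proof (cases "b \<le> freq_max H \<xi>")
  case True
  then obtain i where i: "b \<le> \<bar>\<xi> $ i\<bar> powr (H $ i)" by (auto simp: le_freq_max_iff)
  let ?f = "\<lambda>j. 4 * m\<^sup>2 * kernel_envelope (H $ j) (\<xi> $ j)"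
  have "(sheet_kernel H p x \<xi> - sheet_kernel H p y \<xi>)\<^sup>2 \<le> 2 * (sheet_kernel H p x \<xi>)\<^sup>2 + 2 * (sheet_kernel H p y \<xi>)\<^sup>2"
    using zero_le_power2[of "sheet_kernel H p x \<xi> + sheet_kernel H p y \<xi>"] by (simp add: power2_diff power2_sum)
  also have "\<dots> \<le> 4 * (\<Prod>j\<in>UNIV. ?f j)"
    using sheet_kernel_sq_le[OF xy(1) m, of H p \<xi>] sheet_kernel_sq_le[OF xy(2) m, of H p \<xi>] by simp
  also have "(\<Prod>j\<in>UNIV. ?f j) = ?f i * ?F i"
    by (rule prod.remove) simp_all
  also have "\<dots> \<le> ?g i * ?F i"
    using i kernel_envelope_le[of "H $ i" "\<xi> $ i"]
    by (intro mult_right_mono prod_nonneg) (auto simp: kernel_envelope_nonneg mult_left_mono)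
  also have "\<dots> \<le> (\<Sum>i\<in>UNIV. ?g i * ?F i)"
    by (rule member_le_sum) (auto simp: kernel_envelope_nonneg prod_nonneg)
  finally show ?thesis using True by simp
qed (simp add: kernel_envelope_nonneg sum_nonneg prod_nonneg)

lemma nn_integral_sheet_kernel_diff_low_le:
  fixes H x y :: "real^'n::finite"
  assumes H: "\<And>i. 0 < H $ i \<and> H $ i < 1"
    and xy: "\<And>i. \<bar>x $ i\<bar> \<le> m" "\<And>i. \<bar>y $ i\<bar> \<le> m" and m: "1 \<le> m" and a: "0 \<le> a"
  shows "(\<integral>\<^sup>+\<xi>. ennreal (indicator {\<xi>. freq_max H \<xi> < a} \<xi> * (sheet_kernel H p x \<xi> - sheet_kernel H p y \<xi>)\<^sup>2) \<partial>lborel)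
    \<le> ennreal (increment_const H m * (\<Sum>i\<in>UNIV. (a powr (1 / H $ i - 1) * \<bar>x $ i - y $ i\<bar>)\<^sup>2))"
    (is "_ \<le> ennreal (_ * (\<Sum>i\<in>UNIV. (?s i)\<^sup>2))")
proof -
  define B where "B j = kernel_mass m (H $ j)" for j
  define f where "f j t = 4 * m\<^sup>2 * kernel_envelope (H $ j) t" for j t
  define g where "g i t = (x $ i - y $ i)\<^sup>2 * (if \<bar>t\<bar> powr (H $ i) < a then \<bar>t\<bar> powr (1 - 2 * H $ i) else 0)"
    for i t
  have B: "1 \<le> B j" for j unfolding B_def using H[of j] m by (intro one_le_kernel_mass) auto
  have [measurable]: "f j \<in> borel_measurable borel" "g i \<in> borel_measurable borel" for i j
    unfolding f_def[abs_def] g_def[abs_def] by measurable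
  have g_int: "(\<integral>\<^sup>+t. ennreal (g i t) \<partial>lborel) \<le> ennreal (B i * (?s i)\<^sup>2)" for i
  proof -
    have "(\<integral>\<^sup>+t. ennreal (g i t) \<partial>lborel) \<le> ennreal ((x $ i - y $ i)\<^sup>2 * (a powr (2 * (1 / H $ i - 1)) / (1 - H $ i)))"
      unfolding g_def using H[of i] a by (intro nn_integral_cmult_le nn_integral_low_frequency_le) auto
    also have "\<dots> \<le> ennreal ((x $ i - y $ i)\<^sup>2 * (a powr (2 * (1 / H $ i - 1)) * B i))"
      using kernel_mass_ge(1)[of "H $ i" m] H[of i] m
      by (intro ennreal_leI mult_left_mono) (auto simp: B_def divide_inverse mult_left_mono)
    also have "a powr (2 * (1 / H $ i - 1)) = (a powr (1 / H $ i - 1))\<^sup>2"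
      by (simp add: power2_eq_square flip: powr_add)
    finally show ?thesis by (simp add: power_mult_distrib mult_ac)
  qed
  have "(\<integral>\<^sup>+\<xi>. ennreal (indicator {\<xi>. freq_max H \<xi> < a} \<xi> * (sheet_kernel H p x \<xi> - sheet_kernel H p y \<xi>)\<^sup>2) \<partial>lborel)
      \<le> (\<integral>\<^sup>+\<xi>. ennreal (CARD('n) * (\<Sum>i\<in>UNIV. g i (\<xi> $ i) * (\<Prod>j\<in>UNIV - {i}. f j (\<xi> $ j)))) \<partial>lborel)"
    using sheet_kernel_diff_sq_low_le[OF xy m] by (intro nn_integral_mono ennreal_leI) (simp add: f_def g_def)
  also have "\<dots> \<le> ennreal (CARD('n) * ((\<Sum>i\<in>UNIV. B i * (?s i)\<^sup>2) * (\<Prod>j\<in>UNIV. B j)))"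
    using H B g_int order_trans[OF zero_le_one B]
    by (intro nn_integral_cmult_le nn_integral_sum_prod_except_le)
      (auto simp: f_def g_def B_def kernel_envelope_nonneg nn_integral_scaled_kernel_envelope_le sum_nonneg prod_nonneg)
  also have "\<dots> \<le> ennreal (CARD('n) * ((\<Sum>j\<in>UNIV. B j) * (\<Sum>i\<in>UNIV. (?s i)\<^sup>2) * (\<Prod>j\<in>UNIV. B j)))"
    using sum_mult_le_sum_mult_sum[of UNIV B "\<lambda>i. (?s i)\<^sup>2"] order_trans[OF zero_le_one B]
    by (intro ennreal_leI mult_left_mono mult_right_mono prod_nonneg) auto
  also have "\<dots> \<le> ennreal (increment_const H m * (\<Sum>i\<in>UNIV. (?s i)\<^sup>2))"
  proof -
    have "0 \<le> CARD('n) * ((\<Sum>j\<in>UNIV. B j) * (\<Sum>i\<in>UNIV. (?s i)\<^sup>2) * (\<Prod>j\<in>UNIV. B j))"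
      using order_trans[OF zero_le_one B] by (simp add: sum_nonneg prod_nonneg)
    moreover have "increment_const H m * (\<Sum>i\<in>UNIV. (?s i)\<^sup>2)
        = 4 * (CARD('n) * ((\<Sum>j\<in>UNIV. B j) * (\<Sum>i\<in>UNIV. (?s i)\<^sup>2) * (\<Prod>j\<in>UNIV. B j)))"
      by (simp add: increment_const_def B_def mult_ac)
    ultimately show ?thesis by (intro ennreal_leI) linarith
  qed
  finally show ?thesis .
qed

lemma nn_integral_sheet_kernel_diff_high_le:
  fixes H x y :: "real^'n::finite"
  assumes H: "\<And>i. 0 < H $ i \<and> H $ i < 1"
    and xy: "\<And>i. \<bar>x $ i\<bar> \<le> m" "\<And>i. \<bar>y $ i\<bar> \<le> m" and m: "1 \<le> m" and b: "0 < b"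
  shows "(\<integral>\<^sup>+\<xi>. ennreal (indicator {\<xi>. b \<le> freq_max H \<xi>} \<xi> * (sheet_kernel H p x \<xi> - sheet_kernel H p y \<xi>)\<^sup>2) \<partial>lborel)
    \<le> ennreal (increment_const H m * (1 / b)\<^sup>2)"
proof -
  define B where "B j = kernel_mass m (H $ j)" for j
  define f where "f j t = 4 * m\<^sup>2 * kernel_envelope (H $ j) t" for j t
  define g where "g i t = 4 * m\<^sup>2 * (if b \<le> \<bar>t\<bar> powr (H $ i) then \<bar>t\<bar> powr (- 2 * H $ i - 1) else 0)"
    for i t
  have B: "1 \<le> B j" for j unfolding B_def using H[of j] m by (intro one_le_kernel_mass) auto
  have [measurable]: "f j \<in> borel_measurable borel" "g i \<in> borel_measurable borel" for i j
    unfolding f_def[abs_def] g_def[abs_def] by measurable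
  have g_int: "(\<integral>\<^sup>+t. ennreal (g i t) \<partial>lborel) \<le> ennreal (B i / b\<^sup>2)" for i
  proof -
    have "(\<integral>\<^sup>+t. ennreal (g i t) \<partial>lborel) \<le> ennreal (4 * m\<^sup>2 * (1 / (H $ i * b\<^sup>2)))"
      unfolding g_def using H[of i] b by (intro nn_integral_cmult_le nn_integral_high_frequency_le) auto
    also have "\<dots> \<le> ennreal (B i / b\<^sup>2)"
    proof (intro ennreal_leI)
      have "4 * m\<^sup>2 * (1 / (H $ i * b\<^sup>2)) = 4 * m\<^sup>2 / H $ i / b\<^sup>2" by simp
      also have "\<dots> \<le> B i / b\<^sup>2"
        using kernel_mass_ge(2)[of "H $ i" m] H[of i] m by (intro divide_right_mono) (auto simp: B_def)
      finally show "4 * m\<^sup>2 * (1 / (H $ i * b\<^sup>2)) \<le> B i / b\<^sup>2" .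
    qed
    finally show ?thesis .
  qed
  have N: "1 \<le> real CARD('n)"
    using finite_UNIV_card_ge_0[where 'a='n] by simp
  have "(\<integral>\<^sup>+\<xi>. ennreal (indicator {\<xi>. b \<le> freq_max H \<xi>} \<xi> * (sheet_kernel H p x \<xi> - sheet_kernel H p y \<xi>)\<^sup>2) \<partial>lborel)
      \<le> (\<integral>\<^sup>+\<xi>. ennreal (4 * (\<Sum>i\<in>UNIV. g i (\<xi> $ i) * (\<Prod>j\<in>UNIV - {i}. f j (\<xi> $ j)))) \<partial>lborel)"
    using sheet_kernel_diff_sq_high_le[OF xy m] by (intro nn_integral_mono ennreal_leI) (simp add: f_def g_def)
  also have "\<dots> \<le> ennreal (4 * ((\<Sum>i\<in>UNIV. B i / b\<^sup>2) * (\<Prod>j\<in>UNIV. B j)))"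
    using H B g_int order_trans[OF zero_le_one B]
    by (intro nn_integral_cmult_le nn_integral_sum_prod_except_le)
      (auto simp: f_def g_def B_def kernel_envelope_nonneg nn_integral_scaled_kernel_envelope_le sum_nonneg prod_nonneg)
  also have "\<dots> \<le> ennreal (increment_const H m * (1 / b)\<^sup>2)"
    using mult_right_mono[OF N, of "4 * ((\<Sum>i\<in>UNIV. B i) * (\<Prod>j\<in>UNIV. B j) / b\<^sup>2)"] order_trans[OF zero_le_one B]
    by (intro ennreal_leI)
      (simp add: increment_const_def B_def[symmetric] sum_divide_distrib[symmetric] power_divide mult_ac
        sum_nonneg prod_nonneg)
  finally show ?thesis .
qed

lemma nn_integral_sheet_kernel_diff_outside_band_le:
  fixes H x y :: "real^'n::finite" and b :: ereal
  assumes H: "\<And>i. 0 < H $ i \<and> H $ i < 1"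
    and xy: "\<And>i. \<bar>x $ i\<bar> \<le> m" "\<And>i. \<bar>y $ i\<bar> \<le> m" and m: "1 \<le> m"
    and a: "0 \<le> a" and ab: "ereal a < b"
  shows "(\<integral>\<^sup>+\<xi>. ennreal (indicator {\<xi>. freq_max H \<xi> \<notin> {r. a \<le> r \<and> ereal r < b}} \<xi>
              * (sheet_kernel H p x \<xi> - sheet_kernel H p y \<xi>)\<^sup>2) \<partial>lborel)
    \<le> ennreal (increment_const H m * ((\<Sum>i\<in>UNIV. a powr (1 / H $ i - 1) * \<bar>x $ i - y $ i\<bar>)
                + (if b = \<infinity> then 0 else 1 / real_of_ereal b))\<^sup>2)"
proof -
  define s where "s i = a powr (1 / H $ i - 1) * \<bar>x $ i - y $ i\<bar>" for i
  define t where "t = (if b = \<infinity> then 0 else 1 / real_of_ereal b)"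
  define D where "D \<xi> = (sheet_kernel H p x \<xi> - sheet_kernel H p y \<xi>)\<^sup>2" for \<xi>
  have [measurable]: "D \<in> borel_measurable borel" unfolding D_def by measurable
  have s: "0 \<le> s i" for i by (simp add: s_def)
  have t: "0 \<le> t" using a ab by (cases b) (auto simp: t_def)
  have K: "0 \<le> increment_const H m" by (rule increment_const_nonneg[OF H m])
  have high: "(\<integral>\<^sup>+\<xi>. ennreal (indicator {\<xi>. b \<le> ereal (freq_max H \<xi>)} \<xi> * D \<xi>) \<partial>lborel)
      \<le> ennreal (increment_const H m * t\<^sup>2)"
  proof (cases b)
    case (real \<beta>)
    then have "0 < \<beta>" "t = 1 / \<beta>" using a ab by (auto simp: t_def)
    then show ?thesis
      using nn_integral_sheet_kernel_diff_high_le[OF H xy m \<open>0 < \<beta>\<close>, of p] by (simp add: D_def real)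
  qed (use ab in simp_all)
  have "indicator {\<xi>. freq_max H \<xi> \<notin> {r. a \<le> r \<and> ereal r < b}} \<xi> * D \<xi>
      = indicator {\<xi>. freq_max H \<xi> < a} \<xi> * D \<xi> + indicator {\<xi>. b \<le> ereal (freq_max H \<xi>)} \<xi> * D \<xi>" for \<xi>
    by (auto simp: indicator_def not_less dest: order.strict_trans2[OF ab])
  then have "(\<integral>\<^sup>+\<xi>. ennreal (indicator {\<xi>. freq_max H \<xi> \<notin> {r. a \<le> r \<and> ereal r < b}} \<xi> * D \<xi>) \<partial>lborel)
      = (\<integral>\<^sup>+\<xi>. ennreal (indicator {\<xi>. freq_max H \<xi> < a} \<xi> * D \<xi>) \<partial>lborel)
        + (\<integral>\<^sup>+\<xi>. ennreal (indicator {\<xi>. b \<le> ereal (freq_max H \<xi>)} \<xi> * D \<xi>) \<partial>lborel)"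
    by (subst nn_integral_add[symmetric]) (auto simp: D_def intro!: nn_integral_cong ennreal_plus)
  also have "\<dots> \<le> ennreal (increment_const H m * (\<Sum>i\<in>UNIV. (s i)\<^sup>2)) + ennreal (increment_const H m * t\<^sup>2)"
    using nn_integral_sheet_kernel_diff_low_le[OF H xy m a, of p] high
    unfolding D_def s_def by (rule add_mono)
  also have "\<dots> \<le> ennreal (increment_const H m * ((\<Sum>i\<in>UNIV. s i) + t)\<^sup>2)"
  proof -
    have "(\<Sum>i\<in>UNIV. (s i)\<^sup>2) + t\<^sup>2 \<le> ((\<Sum>i\<in>UNIV. s i) + t)\<^sup>2"
      using sum_squares_le_square_sum[of UNIV s] s mult_nonneg_nonneg[OF sum_nonneg[of UNIV s] t]
      by (simp add: power2_sum)
    then show ?thesis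
      using K s t by (simp add: ennreal_plus[symmetric] sum_nonneg distrib_left[symmetric] mult_left_mono)
  qed
  finally show ?thesis unfolding D_def s_def t_def .
qed

section \<open>The fractional Brownian sheet\<close>

lemma fbs_kernel_eq:
  "fbs_kernel H A x k ((p, k'), \<xi>) = (if k' = k \<and> freq_max H \<xi> \<in> A then c_H H * sheet_kernel H p x \<xi> else 0)"
  by (simp add: fbs_kernel_def freq_max_def sheet_kernel_def kernel_factor_def)

lemma fbs_kernel_diff_compl:
  "fbs_kernel H UNIV x k s - fbs_kernel H A x k s = fbs_kernel H (- A) x k s"
  by (cases s) (auto simp: fbs_kernel_eq)

lemma borel_measurable_fbs_kernel:
  fixes H :: "real^'n::finite" and k :: "'d::finite"
  assumes "A \<in> sets borel"
  shows "fbs_kernel H A x k \<in> borel_measurable (count_space UNIV \<Otimes>\<^sub>M (lborel :: (real^'n) measure))"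
proof (rule measurable_pair_measure_countable1)
  fix pk :: "('n \<Rightarrow> bool) \<times> 'd"
  show "(\<lambda>\<xi>. fbs_kernel H A x k (pk, \<xi>)) \<in> borel_measurable lborel"
    using assms by (cases pk) (simp add: fbs_kernel_eq)
qed simp

lemma square_integrable_fbs_kernel:
  fixes H x :: "real^'n::finite" and k :: "'d::finite"
  assumes H: "\<And>i. 0 < H $ i \<and> H $ i < 1" and x: "\<And>i. \<bar>x $ i\<bar> \<le> m" and m: "1 \<le> m"
    and A: "A \<in> sets borel"
  shows "square_integrable (count_space UNIV \<Otimes>\<^sub>M lborel) (fbs_kernel H A x k)"
proof -
  let ?S = "count_space UNIV \<Otimes>\<^sub>M (lborel :: (real^'n) measure)"
  have [measurable]: "fbs_kernel H A x k \<in> borel_measurable ?S"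
    by (rule borel_measurable_fbs_kernel[OF A])
  have kernel_int: "(\<integral>\<^sup>+\<xi>. ennreal ((fbs_kernel H A x k (pk, \<xi>))\<^sup>2) \<partial>lborel) < top" for pk
  proof -
    obtain p k' where pk: "pk = (p, k')" by (cases pk)
    have "(\<integral>\<^sup>+\<xi>. ennreal ((fbs_kernel H A x k (pk, \<xi>))\<^sup>2) \<partial>lborel)
        \<le> (\<integral>\<^sup>+\<xi>. ennreal ((c_H H)\<^sup>2) * ennreal (\<Prod>j\<in>UNIV. 4 * m\<^sup>2 * kernel_envelope (H $ j) (\<xi> $ j)) \<partial>lborel)"
    proof (intro nn_integral_mono)
      fix \<xi> :: "real^'n"
      have "(fbs_kernel H A x k (pk, \<xi>))\<^sup>2 \<le> (c_H H)\<^sup>2 * (sheet_kernel H p x \<xi>)\<^sup>2"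
        by (simp add: pk fbs_kernel_eq power_mult_distrib)
      also have "\<dots> \<le> (c_H H)\<^sup>2 * (\<Prod>j\<in>UNIV. 4 * m\<^sup>2 * kernel_envelope (H $ j) (\<xi> $ j))"
        by (intro mult_left_mono sheet_kernel_sq_le x m) simp
      finally show "ennreal ((fbs_kernel H A x k (pk, \<xi>))\<^sup>2)
          \<le> ennreal ((c_H H)\<^sup>2) * ennreal (\<Prod>j\<in>UNIV. 4 * m\<^sup>2 * kernel_envelope (H $ j) (\<xi> $ j))"
        by (simp add: ennreal_mult'[symmetric] ennreal_leI)
    qed
    also have "\<dots> = ennreal ((c_H H)\<^sup>2) * (\<Prod>j\<in>UNIV. \<integral>\<^sup>+t. ennreal (4 * m\<^sup>2 * kernel_envelope (H $ j) t) \<partial>lborel)"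
      using nn_integral_vec_prod[of "\<lambda>j t. 4 * m\<^sup>2 * kernel_envelope (H $ j) t"]
      by (simp add: nn_integral_cmult kernel_envelope_nonneg)
    also have "\<dots> \<le> ennreal ((c_H H)\<^sup>2) * (\<Prod>j\<in>UNIV. ennreal (kernel_mass m (H $ j)))"
      using H by (intro mult_left_mono prod_mono_ennreal nn_integral_scaled_kernel_envelope_le) auto
    also have "\<dots> = ennreal ((c_H H)\<^sup>2 * (\<Prod>j\<in>UNIV. kernel_mass m (H $ j)))"
      using H m order_trans[OF zero_le_one one_le_kernel_mass]
      by (simp add: prod_ennreal ennreal_mult prod_nonneg less_imp_le)
    also have "\<dots> < top" by simp
    finally show ?thesis .
  qed
  have "(\<integral>\<^sup>+s. ennreal ((fbs_kernel H A x k s)\<^sup>2) \<partial>?S) < top"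
    using kernel_int
    by (subst nn_integral_finite_count_space_pair) (simp_all add: lborel.sigma_finite_measure_axioms)
  then show ?thesis
    by (simp add: square_integrable_def integrable_iff_bounded power2_abs)
qed

lemma sets_borel_band: "{r::real. a \<le> r \<and> ereal r < b} \<in> sets borel"
proof -
  have "{r::real. ereal r < b} \<in> sets borel" by measurable
  then show ?thesis by measurable
qed

lemma band_rate_nonneg:
  assumes "0 \<le> a" "ereal a < b"
  shows "0 \<le> (\<Sum>i\<in>UNIV. a powr (1 / H $ i - 1) * \<bar>x $ i - y $ i\<bar>) + (if b = \<infinity> then 0 else 1 / real_of_ereal b)"
  using assms by (cases b) (auto intro!: add_nonneg_nonneg sum_nonneg)

lemma integral_fbs_kernel_diff_outside_band_le:
  fixes H x y :: "real^'n::finite" and b :: ereal and k :: "'d::finite"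
  assumes H: "\<And>i. 0 < H $ i \<and> H $ i < 1"
    and xy: "\<And>i. \<bar>x $ i\<bar> \<le> m" "\<And>i. \<bar>y $ i\<bar> \<le> m" and m: "1 \<le> m"
    and a: "0 \<le> a" and ab: "ereal a < b"
  defines "A \<equiv> - {r. a \<le> r \<and> ereal r < b}"
  shows "(\<integral>s. (fbs_kernel H A x k s - fbs_kernel H A y k s)\<^sup>2 \<partial>(count_space UNIV \<Otimes>\<^sub>M lborel))
    \<le> CARD(('n \<Rightarrow> bool) \<times> 'd) * (c_H H)\<^sup>2 * increment_const H m
       * ((\<Sum>i\<in>UNIV. a powr (1 / H $ i - 1) * \<bar>x $ i - y $ i\<bar>) + (if b = \<infinity> then 0 else 1 / real_of_ereal b))\<^sup>2"
proof -
  let ?S = "count_space UNIV \<Otimes>\<^sub>M (lborel :: (real^'n) measure)"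
  define Q where "Q = increment_const H m
       * ((\<Sum>i\<in>UNIV. a powr (1 / H $ i - 1) * \<bar>x $ i - y $ i\<bar>) + (if b = \<infinity> then 0 else 1 / real_of_ereal b))\<^sup>2"
  define g where "g s = fbs_kernel H A x k s - fbs_kernel H A y k s" for s
  have [measurable]: "g \<in> borel_measurable ?S"
    unfolding g_def A_def using borel_measurable_fbs_kernel sets_borel_band by measurable
  have Q: "0 \<le> Q" unfolding Q_def using increment_const_nonneg[OF H m] by simp
  have slice_bound: "(\<integral>\<^sup>+\<xi>. ennreal ((g (pk, \<xi>))\<^sup>2) \<partial>lborel) \<le> ennreal ((c_H H)\<^sup>2 * Q)" for pk
  proof -
    obtain p k' where pk: "pk = (p, k')" by (cases pk)
    have "(g (pk, \<xi>))\<^sup>2 \<le> (c_H H)\<^sup>2 * (indicator {\<xi>. freq_max H \<xi> \<notin> {r. a \<le> r \<and> ereal r < b}} \<xi>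
        * (sheet_kernel H p x \<xi> - sheet_kernel H p y \<xi>)\<^sup>2)" for \<xi>
      by (auto simp: g_def pk fbs_kernel_eq A_def indicator_def power_mult_distrib right_diff_distrib[symmetric])
    then have "(\<integral>\<^sup>+\<xi>. ennreal ((g (pk, \<xi>))\<^sup>2) \<partial>lborel) \<le> (\<integral>\<^sup>+\<xi>. ennreal ((c_H H)\<^sup>2
        * (indicator {\<xi>. freq_max H \<xi> \<notin> {r. a \<le> r \<and> ereal r < b}} \<xi> * (sheet_kernel H p x \<xi> - sheet_kernel H p y \<xi>)\<^sup>2)) \<partial>lborel)"
      by (intro nn_integral_mono ennreal_leI)
    also have "\<dots> \<le> ennreal ((c_H H)\<^sup>2 * Q)"
      unfolding Q_def by (intro nn_integral_cmult_le nn_integral_sheet_kernel_diff_outside_band_le H xy m a ab) auto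
    finally show ?thesis .
  qed
  have "(\<integral>\<^sup>+s. ennreal ((g s)\<^sup>2) \<partial>?S) = (\<Sum>pk\<in>UNIV. \<integral>\<^sup>+\<xi>. ennreal ((g (pk, \<xi>))\<^sup>2) \<partial>lborel)"
    by (rule nn_integral_finite_count_space_pair) (simp_all add: lborel.sigma_finite_measure_axioms)
  also have "\<dots> \<le> (\<Sum>pk\<in>(UNIV :: (('n \<Rightarrow> bool) \<times> 'd) set). ennreal ((c_H H)\<^sup>2 * Q))"
    by (rule sum_mono) (rule slice_bound)
  also have "\<dots> = ennreal (CARD(('n \<Rightarrow> bool) \<times> 'd) * (c_H H)\<^sup>2 * Q)"
    using Q by (simp add: ennreal_of_nat_eq_real_of_nat ennreal_mult'[symmetric] mult.assoc)
  finally have "(\<integral>s. (g s)\<^sup>2 \<partial>?S) \<le> CARD(('n \<Rightarrow> bool) \<times> 'd) * (c_H H)\<^sup>2 * Q"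
    using Q by (subst integral_eq_nn_integral) (auto intro: enn2real_leI)
  then show ?thesis by (simp add: g_def Q_def mult.assoc)
qed

lemma fbs_eq_fbs_part_UNIV: "fbs H W = fbs_part H W UNIV"
  by (simp add: fbs_def fbs_part_def fun_eq_iff)

lemma fbs_part_component_measurable:
  fixes H x :: "real^'n::finite" and k :: "'d::finite"
  assumes "\<And>i. 0 < H $ i \<and> H $ i < 1" "white_noise_family P W"
    and "\<And>i. \<bar>x $ i\<bar> \<le> m" "1 \<le> m" "A \<in> sets borel"
  shows "(\<lambda>\<omega>. fbs_part H W A x \<omega> $ k) \<in> borel_measurable P"
  using isonormal_measurable[OF _ square_integrable_fbs_kernel[OF assms(1,3-5)]] assms(2)
  by (simp add: fbs_part_def white_noise_family_def)

lemma fbs_part_compl_AE: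
  fixes H x :: "real^'n::finite" and k :: "'d::finite"
  assumes H: "\<And>i. 0 < H $ i \<and> H $ i < 1" and W: "white_noise_family P W"
    and x: "\<And>i. \<bar>x $ i\<bar> \<le> m" and m: "1 \<le> m" and A: "A \<in> sets borel"
  shows "AE \<omega> in P. W (fbs_kernel H (- A) x k) \<omega> = fbs_part H W UNIV x \<omega> $ k - fbs_part H W A x \<omega> $ k"
proof -
  have iso: "isonormal P (count_space UNIV \<Otimes>\<^sub>M lborel) W" using W by (simp add: white_noise_family_def)
  have "AE \<omega> in P. W (\<lambda>s. fbs_kernel H UNIV x k s - fbs_kernel H A x k s) \<omega>
      = W (fbs_kernel H UNIV x k) \<omega> - W (fbs_kernel H A x k) \<omega>"
    by (intro isonormal_diff[OF iso] square_integrable_fbs_kernel[OF H x m] A) simp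
  then show ?thesis by (simp add: fbs_part_def fbs_kernel_diff_compl)
qed

lemma L2norm_fbs_increment_outside_band_le:
  fixes H x y :: "real^'n::finite" and b :: ereal
    and W :: "((('n \<Rightarrow> bool) \<times> 'd::finite) \<times> (real^'n) \<Rightarrow> real) \<Rightarrow> 'a \<Rightarrow> real"
  assumes H: "\<And>i. 0 < H $ i \<and> H $ i < 1" and W: "white_noise_family P W"
    and xy: "\<And>i. \<bar>x $ i\<bar> \<le> m" "\<And>i. \<bar>y $ i\<bar> \<le> m" and m: "1 \<le> m"
    and a: "0 \<le> a" and ab: "ereal a < b"
  defines "A \<equiv> {r. a \<le> r \<and> ereal r < b}"
  shows "L2norm P (\<lambda>\<omega>. (fbs H W x \<omega> - fbs_part H W A x \<omega>) - (fbs H W y \<omega> - fbs_part H W A y \<omega>))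
    \<le> sqrt (CARD('d) * CARD(('n \<Rightarrow> bool) \<times> 'd) * (c_H H)\<^sup>2 * increment_const H m)
       * ((\<Sum>i\<in>UNIV. a powr (1 / H $ i - 1) * \<bar>x $ i - y $ i\<bar>) + (if b = \<infinity> then 0 else 1 / real_of_ereal b))"
    (is "_ \<le> sqrt ?C * ?Q")
proof -
  let ?S = "count_space UNIV \<Otimes>\<^sub>M (lborel :: (real^'n) measure)"
  have iso: "isonormal P ?S W" using W by (simp add: white_noise_family_def)
  have A: "A \<in> sets borel" "- A \<in> sets borel" unfolding A_def using sets_borel_band by auto
  define g where "g k s = fbs_kernel H (- A) x k s - fbs_kernel H (- A) y k s" for k :: 'd and s
  have g: "square_integrable ?S (g k)" for k
    unfolding g_def[abs_def] by (intro square_integrable_diff square_integrable_fbs_kernel[OF H _ m A(2)] xy)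
  have g_AE: "AE \<omega> in P. W (g k) \<omega> = W (fbs_kernel H (- A) x k) \<omega> - W (fbs_kernel H (- A) y k) \<omega>" for k
    unfolding g_def[abs_def] by (intro isonormal_diff[OF iso] square_integrable_fbs_kernel[OF H _ m A(2)] xy)
  have X_eq: "AE \<omega> in P. (fbs H W x \<omega> - fbs_part H W A x \<omega> - (fbs H W y \<omega> - fbs_part H W A y \<omega>)) $ k
      = W (g k) \<omega>" for k
    using g_AE[of k] fbs_part_compl_AE[OF H W xy(1) m A(1), of k] fbs_part_compl_AE[OF H W xy(2) m A(1), of k]
    unfolding fbs_eq_fbs_part_UNIV by eventually_elim simp
  have X_meas: "(\<lambda>\<omega>. (fbs H W x \<omega> - fbs_part H W A x \<omega> - (fbs H W y \<omega> - fbs_part H W A y \<omega>)) $ k)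
      \<in> borel_measurable P" for k
    using fbs_part_component_measurable[OF H W _ m] A xy unfolding fbs_eq_fbs_part_UNIV by simp
  have "L2norm P (\<lambda>\<omega>. fbs H W x \<omega> - fbs_part H W A x \<omega> - (fbs H W y \<omega> - fbs_part H W A y \<omega>))
      = sqrt (\<Sum>k\<in>UNIV. \<integral>s. (g k s)\<^sup>2 \<partial>?S)"
    by (rule L2norm_isonormal_components[OF iso g X_meas X_eq])
  also have "\<dots> \<le> sqrt (\<Sum>k\<in>(UNIV :: 'd set). CARD(('n \<Rightarrow> bool) \<times> 'd) * (c_H H)\<^sup>2 * increment_const H m * ?Q\<^sup>2)"
    unfolding g_def A_def
    by (intro real_sqrt_le_mono sum_mono integral_fbs_kernel_diff_outside_band_le H xy m a ab)
  also have "\<dots> = sqrt ?C * ?Q"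
    using band_rate_nonneg[OF a ab, of H x y] by (simp add: real_sqrt_mult mult.assoc)
  finally show ?thesis .
qed

theorem lemma5p1:
  fixes H :: "real^'n::finite"
    and P :: "'a measure"
    and W :: "((('n \<Rightarrow> bool) \<times> 'd::finite) \<times> (real^'n) \<Rightarrow> real) \<Rightarrow> 'a \<Rightarrow> real"
    and n :: nat
  assumes H: "\<And>i. 0 < H $ i \<and> H $ i < 1"
    and W: "white_noise_family P W"
    and n: "n > 1"
  shows "\<exists>c0 > 0. \<forall>(a::real) (b::ereal) (x::real^'n) (y::real^'n).
     0 \<le> a \<and> ereal a < b \<and>
     (\<forall>i. 1 / real n \<le> x $ i \<and> x $ i \<le> real n) \<and>
     (\<forall>i. 1 / real n \<le> y $ i \<and> y $ i \<le> real n) \<longrightarrow>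
     L2norm P (\<lambda>\<omega>. (fbs H W x \<omega> - fbs_part H W {r. a \<le> r \<and> ereal r < b} x \<omega>)
                   - (fbs H W y \<omega> - fbs_part H W {r. a \<le> r \<and> ereal r < b} y \<omega>))
       \<le> c0 * ((\<Sum>i\<in>UNIV. a powr (1 / H $ i - 1) * \<bar>x $ i - y $ i\<bar>)
               + (if b = \<infinity> then 0 else 1 / real_of_ereal b))"
proof -
  define m where "m = real n"
  have m: "1 \<le> m" using n by (simp add: m_def)
  define C where "C = sqrt (CARD('d) * CARD(('n \<Rightarrow> bool) \<times> 'd) * (c_H H)\<^sup>2 * increment_const H m)"
  have "0 \<le> C" unfolding C_def using increment_const_nonneg[OF H m] by simp
  have in_box: "\<bar>z $ i\<bar> \<le> m" if "\<forall>i. 1 / real n \<le> z $ i \<and> z $ i \<le> real n" for z :: "real^'n" and i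
  proof -
    have "0 < 1 / real n" using n by simp
    then show ?thesis using that[rule_format, of i] unfolding m_def by (intro abs_leI) linarith+
  qed
  have "L2norm P (\<lambda>\<omega>. (fbs H W x \<omega> - fbs_part H W {r. a \<le> r \<and> ereal r < b} x \<omega>)
                    - (fbs H W y \<omega> - fbs_part H W {r. a \<le> r \<and> ereal r < b} y \<omega>))
      \<le> (C + 1) * ((\<Sum>i\<in>UNIV. a powr (1 / H $ i - 1) * \<bar>x $ i - y $ i\<bar>)
                   + (if b = \<infinity> then 0 else 1 / real_of_ereal b))"
    if "0 \<le> a" "ereal a < b" "\<forall>i. 1 / real n \<le> x $ i \<and> x $ i \<le> real n"
      "\<forall>i. 1 / real n \<le> y $ i \<and> y $ i \<le> real n" for a b x y
  proof -
    note increment = L2norm_fbs_increment_outside_band_le[OF H W in_box[OF that(3)] in_box[OF that(4)] m that(1,2)]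
    show ?thesis
      using band_rate_nonneg[OF that(1,2), of H x y]
      by (intro order_trans[OF increment[folded C_def]] mult_right_mono) simp_all
  qed
  then show ?thesis using \<open>0 \<le> C\<close> by (intro exI[of _ "C + 1"]) auto
qed

end
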